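(* Let $0<\varepsilon\le1/2$, $q\in(0,1]$ and let $(G_n)$ be an expander sequence. Let each $\tilde G_n$ be obtained by deleting edges of $G_n$ such that each vertex keeps at least a $(1/2+\varepsilon)$ fraction of its edges, and let $I_t=I_t^{(pull)}$ for pull on $\tilde G_n$. Let further $q\in(0,1)$ and $|I_t|\le n/2$. Then for $\tau=-\log n/\log(1-q)$ and all $c<1$, whp $|I_{t+c\tau}|<n$.
   Context: pull protocol: in each synchronous round every uninformed vertex chooses a neighbour independently and uniformly at random, and if that neighbour is informed and the transmission succeeds (independently with probability $q$), the asking vertex becomes informed. $I_t$ is the set of vertices informed at the beginning of round $t$; probabilities are conditional on $I_t$. An expander sequence is a sequence $(G_n)$ of connected graphs, $G_n$ on $n$ vertices with minimum degree $\delta_n$, maximum degree $\Delta_n$, and $\lambda_n=\max\{|\mu_2|,|\mu_n|\}$ (adjacency eigenvalues), with $\Delta_n/\delta_n=1+o(1)$ and $\lambda_n=o(\Delta_n)$. "Keeps at least a $(1/2+\varepsilon)$ fraction" means $d_{\tilde G_n}(v)\ge(1/2+\varepsilon)d_{G_n}(v)$. whp means with probability $1-o(1)$ as $n\to\infty$; natural log. *)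

theory Defs
  imports "HOL-Probability.Probability" "Jordan_Normal_Form.Char_Poly"
begin

definition simple_graph :: "nat \<Rightarrow> (nat \<Rightarrow> nat \<Rightarrow> bool) \<Rightarrow> bool" where
  "simple_graph n E \<longleftrightarrow> (\<forall>u v. E u v \<longrightarrow> u < n \<and> v < n \<and> u \<noteq> v \<and> E v u)"

definition nbrs :: "(nat \<Rightarrow> nat \<Rightarrow> bool) \<Rightarrow> nat \<Rightarrow> nat set" where
  "nbrs E v = {u. E v u}"

definition deg :: "(nat \<Rightarrow> nat \<Rightarrow> bool) \<Rightarrow> nat \<Rightarrow> nat" where
  "deg E v = card (nbrs E v)"

definition graph_connected :: "nat \<Rightarrow> (nat \<Rightarrow> nat \<Rightarrow> bool) \<Rightarrow> bool" where
  "graph_connected n E \<longleftrightarrow> n > 0 \<and> (\<forall>u<n. \<forall>v<n. (E\<^sup>*\<^sup>*) u v)"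

definition min_deg :: "nat \<Rightarrow> (nat \<Rightarrow> nat \<Rightarrow> bool) \<Rightarrow> nat" where
  "min_deg n E = Min (deg E ` {..<n})"

definition max_deg :: "nat \<Rightarrow> (nat \<Rightarrow> nat \<Rightarrow> bool) \<Rightarrow> nat" where
  "max_deg n E = Max (deg E ` {..<n})"

definition adj_matrix :: "nat \<Rightarrow> (nat \<Rightarrow> nat \<Rightarrow> bool) \<Rightarrow> real mat" where
  "adj_matrix n E = mat n n (\<lambda>(i, j). if E i j then 1 else 0)"

text \<open>Adjacency eigenvalues mu_1 >= ... >= mu_n (with multiplicity), as the roots of the
  characteristic polynomial (which splits over the reals, the matrix being symmetric).\<close>
definition adj_eigenvalues :: "nat \<Rightarrow> (nat \<Rightarrow> nat \<Rightarrow> bool) \<Rightarrow> real list" where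
  "adj_eigenvalues n E = rev (sorted_list_of_multiset (proots (char_poly (adj_matrix n E))))"

definition spec_lambda :: "nat \<Rightarrow> (nat \<Rightarrow> nat \<Rightarrow> bool) \<Rightarrow> real" where
  "spec_lambda n E = max \<bar>adj_eigenvalues n E ! 1\<bar> \<bar>last (adj_eigenvalues n E)\<bar>"

definition expander_sequence :: "(nat \<Rightarrow> nat \<Rightarrow> nat \<Rightarrow> bool) \<Rightarrow> bool" where
  "expander_sequence G \<longleftrightarrow>
     (\<forall>n>0. simple_graph n (G n) \<and> graph_connected n (G n)) \<and>
     ((\<lambda>n. real (max_deg n (G n)) / real (min_deg n (G n))) \<longlonglongrightarrow> 1) \<and>
     ((\<lambda>n. spec_lambda n (G n) / real (max_deg n (G n))) \<longlonglongrightarrow> 0)"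

text \<open>One round of pull on the graph with edge relation E on {..<n}, success probability q,
  from informed set S: every uninformed vertex independently picks a uniformly random
  neighbour (None if it has none) and an independent success coin; it becomes informed iff
  the chosen neighbour is informed and the coin succeeds.\<close>
definition pull_choice :: "(nat \<Rightarrow> nat \<Rightarrow> bool) \<Rightarrow> real \<Rightarrow> nat \<Rightarrow> (nat option \<times> bool) pmf" where
  "pull_choice E q v =
     pair_pmf (if nbrs E v = {} then return_pmf None else map_pmf Some (pmf_of_set (nbrs E v)))
              (bernoulli_pmf q)"

definition pull_step :: "nat \<Rightarrow> (nat \<Rightarrow> nat \<Rightarrow> bool) \<Rightarrow> real \<Rightarrow> nat set \<Rightarrow> nat set pmf" where
  "pull_step n E q S =
     map_pmf (\<lambda>ch. S \<union> {v \<in> {..<n} - S. \<exists>u. fst (ch v) = Some u \<and> u \<in> S \<and> snd (ch v)})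
       (Pi_pmf ({..<n} - S) (None, False) (pull_choice E q))"

fun pull_rounds :: "nat \<Rightarrow> (nat \<Rightarrow> nat \<Rightarrow> bool) \<Rightarrow> real \<Rightarrow> nat \<Rightarrow> nat set \<Rightarrow> nat set pmf" where
  "pull_rounds n E q 0 S = return_pmf S"
| "pull_rounds n E q (Suc k) S = pull_step n E q S \<bind> pull_rounds n E q k"

end

theory Submission imports Defs "HOL-Real_Asymp.Real_Asymp" begin

text \<open>Whatever the graph, an uninformed vertex becomes informed in a round only if its
  success coin comes up, i.e. with probability at most q. Hence the expected value of
  a ^ (number of uninformed vertices) contracts by at most the factor q + (1 - q) a per
  round, and inductively the probability that everybody is informed after k rounds is
  at most (1 - (1 - q) ^ k) ^ m, where m is the initial number of uninformed vertices.
  For k at most c times tau we have (1 - q) ^ k \<ge> n powr (- max 0 c), and m \<ge> n/2, so this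
  probability is at most exp (- n powr (1 - max 0 c) / 2), which tends to 0 since c < 1.\<close>

lemma measure_bind_pmf:
  "measure_pmf.prob (bind_pmf M N) X = measure_pmf.expectation M (\<lambda>x. measure_pmf.prob (N x) X)"
proof -
  have int: "integrable (measure_pmf M) (\<lambda>x. measure_pmf.prob (N x) X)"
    by (rule measure_pmf.integrable_const_bound[where B=1]) auto
  have "ennreal (measure_pmf.prob (bind_pmf M N) X) = (\<integral>\<^sup>+x. emeasure (measure_pmf (N x)) X \<partial>M)"
    by (simp add: measure_pmf.emeasure_eq_measure[symmetric])
  also have "\<dots> = (\<integral>\<^sup>+x. ennreal (measure_pmf.prob (N x) X) \<partial>M)"
    by (simp add: measure_pmf.emeasure_eq_measure)
  also have "\<dots> = ennreal (measure_pmf.expectation M (\<lambda>x. measure_pmf.prob (N x) X))"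
    using int by (intro nn_integral_eq_integral) auto
  finally show ?thesis by (simp add: integral_nonneg_AE)
qed

lemma power_card_Diff_eq_prod:
  assumes "finite U"
  shows "a ^ card (U - {v. P v}) = (\<Prod>v\<in>U. if P v then 1 else a)"
proof -
  have "(\<Prod>v\<in>U. if P v then 1 else a) = (\<Prod>v\<in>U \<inter> {v. P v}. 1) * (\<Prod>v\<in>U \<inter> - {v. P v}. a)"
    using assms by (simp add: prod.If_cases)
  then show ?thesis by (simp add: Diff_eq)
qed

lemma set_pmf_pull_step_subset:
  assumes "S \<subseteq> {..<n}" "S' \<in> set_pmf (pull_step n E q S)"
  shows "S' \<subseteq> {..<n}"
  using assms unfolding pull_step_def by auto

lemma expectation_pull_choice_le:
  assumes "0 \<le> a" "a \<le> 1" "0 \<le> q" "q \<le> 1" and success: "\<And>y. P y \<Longrightarrow> snd y"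
  shows "measure_pmf.expectation (pull_choice E q v) (\<lambda>y. if P y then 1 else a) \<le> q + (1 - q) * a"
proof -
  have "measure_pmf.expectation (pull_choice E q v) (\<lambda>y. if P y then 1 else a)
        \<le> measure_pmf.expectation (pull_choice E q v) (\<lambda>y. (\<lambda>b. if b then 1 else a) (snd y))"
    using assms
    by (intro integral_mono measure_pmf.integrable_const_bound[where B=1]) (auto dest: success)
  also have "\<dots> = measure_pmf.expectation (bernoulli_pmf q) (\<lambda>b. if b then 1 else a)"
    unfolding pull_choice_def by (rule expectation_pair_pmf_snd)
  also have "\<dots> = q + (1 - q) * a"
    using assms by simp
  finally show ?thesis .
qed

lemma expectation_pull_step_power_le:
  assumes "0 \<le> a" "a \<le> 1" "0 \<le> q" "q \<le> 1"
  shows "measure_pmf.expectation (pull_step n E q S) (\<lambda>S'. a ^ card ({..<n} - S'))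
           \<le> (q + (1 - q) * a) ^ card ({..<n} - S)"
proof -
  define U where "U = {..<n} - S"
  define pulls where "pulls v y \<longleftrightarrow> (\<exists>u. fst y = Some u \<and> u \<in> S \<and> snd y)"
    for v :: nat and y :: "nat option \<times> bool"
  define f where "f v y = (if pulls v y then 1 else a)" for v y
  have fin: "finite U" unfolding U_def by auto
  have outcome: "a ^ card ({..<n} - (S \<union> {v \<in> U. pulls v (ch v)})) = (\<Prod>v\<in>U. f v (ch v))" for ch
  proof -
    have "{..<n} - (S \<union> {v \<in> U. pulls v (ch v)}) = U - {v. pulls v (ch v)}"
      unfolding U_def by auto
    then show ?thesis
      unfolding f_def using power_card_Diff_eq_prod[OF fin] by simp
  qed
  have "measure_pmf.expectation (pull_step n E q S) (\<lambda>S'. a ^ card ({..<n} - S'))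
     = measure_pmf.expectation (Pi_pmf U (None, False) (pull_choice E q)) (\<lambda>ch. \<Prod>v\<in>U. f v (ch v))"
    unfolding pull_step_def integral_map_pmf U_def[symmetric] outcome[symmetric] pulls_def by simp
  also have "\<dots> = (\<Prod>v\<in>U. measure_pmf.expectation (pull_choice E q v) (f v))"
    using assms
    by (intro expectation_prod_Pi_pmf[OF fin] measure_pmf.integrable_const_bound[where B=1])
      (auto simp: f_def)
  also have "\<dots> \<le> (\<Prod>v\<in>U. q + (1 - q) * a)"
    using assms unfolding f_def
    by (intro prod_mono conjI integral_nonneg_AE expectation_pull_choice_le)
      (auto simp: pulls_def)
  also have "\<dots> = (q + (1 - q) * a) ^ card ({..<n} - S)"
    unfolding U_def by simp
  finally show ?thesis .
qed

lemma prob_pull_rounds_all_informed_le: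
  assumes "S \<subseteq> {..<n}" "0 \<le> q" "q \<le> 1"
  shows "measure_pmf.prob (pull_rounds n E q k S) {I. n \<le> card I}
           \<le> (1 - (1 - q) ^ k) ^ card ({..<n} - S)"
  using assms(1)
proof (induction k arbitrary: S)
  case 0
  have "S = {..<n}" if "n \<le> card S"
    using that 0 card_mono[OF finite_lessThan 0] card_subset_eq[OF finite_lessThan 0] by simp
  then show ?case
    by (cases "n \<le> card S") auto
next
  case (Suc k)
  define a where "a = 1 - (1 - q) ^ k"
  have a: "0 \<le> a" "a \<le> 1"
    unfolding a_def using assms by (auto simp: power_le_one)
  have "measure_pmf.prob (pull_rounds n E q (Suc k) S) {I. n \<le> card I}
     = measure_pmf.expectation (pull_step n E q S)
         (\<lambda>S'. measure_pmf.prob (pull_rounds n E q k S') {I. n \<le> card I})"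
    by (simp add: measure_bind_pmf)
  also have "\<dots> \<le> measure_pmf.expectation (pull_step n E q S) (\<lambda>S'. a ^ card ({..<n} - S'))"
    using a Suc.IH set_pmf_pull_step_subset[OF Suc.prems] unfolding a_def
    by (intro integral_mono_AE AE_pmfI measure_pmf.integrable_const_bound[where B=1])
      (auto simp: power_le_one)
  also have "\<dots> \<le> (q + (1 - q) * a) ^ card ({..<n} - S)"
    by (rule expectation_pull_step_power_le[OF a assms(2,3)])
  also have "q + (1 - q) * a = 1 - (1 - q) ^ Suc k"
    unfolding a_def by (simp add: algebra_simps)
  finally show ?case .
qed

lemma prob_pull_rounds_not_all_informed_ge:
  fixes q :: real
  assumes "S \<subseteq> {..<n}" "0 \<le> q" "q \<le> 1"
  shows "1 - exp (- ((1 - q) ^ k * real (card ({..<n} - S))))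
           \<le> measure_pmf.prob (pull_rounds n E q k S) {I. card I < n}"
proof -
  define b where "b = (1 - q) ^ k"
  have b: "0 \<le> b" "b \<le> 1"
    unfolding b_def using assms by (auto simp: power_le_one)
  have "measure_pmf.prob (pull_rounds n E q k S) {I. n \<le> card I} \<le> (1 - b) ^ card ({..<n} - S)"
    unfolding b_def by (rule prob_pull_rounds_all_informed_le[OF assms])
  also have "\<dots> \<le> exp (- b) ^ card ({..<n} - S)"
    using b by (intro power_mono) (auto simp: exp_ge_add_one_self[of "-b", simplified])
  also have "\<dots> = exp (- (b * card ({..<n} - S)))"
    by (simp add: exp_of_nat_mult[symmetric] mult.commute)
  finally have all: "measure_pmf.prob (pull_rounds n E q k S) {I. n \<le> card I}
                       \<le> exp (- (b * card ({..<n} - S)))" .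
  have "measure_pmf.prob (pull_rounds n E q k S) {I. card I < n}
       = 1 - measure_pmf.prob (pull_rounds n E q k S) {I. n \<le> card I}"
    using measure_pmf.prob_compl[of "{I. n \<le> card I}" "pull_rounds n E q k S"]
    by (simp add: Compl_eq_Diff_UNIV[symmetric] Collect_neg_eq[symmetric] not_le)
  with all show ?thesis
    unfolding b_def by simp
qed

lemma powr_le_power_of_rounds:
  fixes q c :: real
  assumes "0 < q" "q < 1" "1 \<le> n"
  shows "real n powr (- max 0 c) \<le> (1 - q) ^ nat \<lfloor>c * (- ln (real n) / ln (1 - q))\<rfloor>"
proof -
  define k where "k = nat \<lfloor>c * (- ln (real n) / ln (1 - q))\<rfloor>"
  define L where "L = - ln (1 - q)"
  have L: "L > 0"
    unfolding L_def using assms by simp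
  have lnn: "0 \<le> ln (real n)"
    using assms by simp
  have "real k \<le> max 0 (c * (ln (real n) / L))"
    unfolding k_def L_def by (cases "0 \<le> \<lfloor>c * (- ln (real n) / ln (1 - q))\<rfloor>") auto
  also have "\<dots> \<le> max 0 c * (ln (real n) / L)"
    using L lnn by (intro max.boundedI mult_right_mono) auto
  finally have "real n powr (- max 0 c) \<le> exp (- L * real k)"
    using L assms(3) by (simp add: powr_def field_simps)
  also have "\<dots> = (1 - q) ^ k"
    unfolding L_def using assms by (simp add: exp_of_nat_mult mult.commute[of "ln (1 - q)"])
  finally show ?thesis
    unfolding k_def .
qed

lemma card_uninformed_ge:
  assumes "S \<subseteq> {..<n}" "real (card S) \<le> real n / 2"
  shows "real n / 2 \<le> real (card ({..<n} - S))"
  using assms card_mono[OF finite_lessThan assms(1)]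
  by (simp add: card_Diff_subset finite_subset of_nat_diff)

theorem lemma3p3:
  fixes G H :: "nat \<Rightarrow> nat \<Rightarrow> nat \<Rightarrow> bool"
    and S :: "nat \<Rightarrow> nat set"
    and \<epsilon> q c :: real
  assumes eps: "0 < \<epsilon>" "\<epsilon> \<le> 1/2"
    and q: "0 < q" "q < 1"
    and exp: "expander_sequence G"
    and sub: "\<forall>n. simple_graph n (H n) \<and> (\<forall>u v. H n u v \<longrightarrow> G n u v)"
    and keep: "\<forall>n. \<forall>v<n. real (deg (H n) v) \<ge> (1/2 + \<epsilon>) * real (deg (G n) v)"
    and S: "\<forall>n. S n \<subseteq> {..<n} \<and> real (card (S n)) \<le> real n / 2"
    and c: "c < 1"
  shows "(\<lambda>n. measure_pmf.prob
             (pull_rounds n (H n) q (nat \<lfloor>c * (- ln (real n) / ln (1 - q))\<rfloor>) (S n))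
             {I. card I < n}) \<longlonglongrightarrow> 1"
proof (rule tendsto_sandwich[OF _ _ _ tendsto_const])
  define d where "d = max 0 c"
  define k where "k n = nat \<lfloor>c * (- ln (real n) / ln (1 - q))\<rfloor>" for n :: nat
  have "0 < 1 - d"
    unfolding d_def using c by simp
  then show "(\<lambda>n. 1 - exp (- (real n powr (1 - d) / 2))) \<longlonglongrightarrow> 1"
    by real_asymp
  show "\<forall>\<^sub>F n in sequentially. 1 - exp (- (real n powr (1 - d) / 2))
          \<le> measure_pmf.prob (pull_rounds n (H n) q (k n) (S n)) {I. card I < n}"
    using eventually_ge_at_top[of "1::nat"]
  proof eventually_elim
    case (elim n)
    have "real n powr (1 - d) / 2 = real n powr (- d) * (real n / 2)"
      using elim by (simp add: powr_diff powr_minus divide_simps)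
    also have "\<dots> \<le> (1 - q) ^ k n * card ({..<n} - S n)"
      using powr_le_power_of_rounds[OF q elim, of c] card_uninformed_ge[of "S n" n] S q
      unfolding d_def k_def by (intro mult_mono) auto
    finally have "exp (- ((1 - q) ^ k n * card ({..<n} - S n))) \<le> exp (- (real n powr (1 - d) / 2))"
      by simp
    moreover have "1 - exp (- ((1 - q) ^ k n * card ({..<n} - S n)))
                     \<le> measure_pmf.prob (pull_rounds n (H n) q (k n) (S n)) {I. card I < n}"
      using S q by (intro prob_pull_rounds_not_all_informed_ge) auto
    ultimately show ?case
      by linarith
  qed
qed simp

end
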